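(* Let $\mathcal G=(\mathcal V,\mathcal E)$ be a connected graph on $n$ vertices, $M\ge2$, $\mathcal X=\{0,\dots,M-1\}$ with a group operation $+$. For $k\ge1$ define \[ \mathcal A_k=\Big\{\boldsymbol w\in\mathcal X^n,\ \boldsymbol w\neq\mathbf 0:\ \big|\{(i,j)\in\mathcal E: i>j,\ w_i-w_j\neq 0\}\big|<k\cdot\mathsf{mincut}\Big\}. \] Then for any $k\le n^2/\mathsf{mincut}$, \[ \frac{\log|\mathcal A_k|}{k}<2\log M+2\log(2k\cdot\mathsf{mincut})+4\tau^{\mathrm{cut}}\le2\log M+4\log(2n)+4\tau^{\mathrm{cut}}. \]
   Context: $x_i-x_j:=x_i+(-x_j)$, and $\mathbf 0$ denotes the vector whose entries are all the identity element $0$. $e(\mathcal S,\mathcal S^{\mathrm c})$ is the number of edges between $\mathcal S$ and $\mathcal V\setminus\mathcal S$; $\mathsf{mincut}=\min_{\emptyset\ne\mathcal S\subsetneq\mathcal V}e(\mathcal S,\mathcal S^{\mathrm c})$; $\mathcal N(m)=\{\mathcal S\subseteq\mathcal V:e(\mathcal S,\mathcal S^{\mathrm c})\le m\}$; $\tau^{\mathrm{cut}}=\max_k\frac1k\log|\mathcal N(k\cdot\mathsf{mincut})|$ over positive integers $k$. *)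

theory Defs
  imports Complex_Main "HOL-Algebra.Group" "HOL-Library.FuncSet"
begin

text \<open>A graph on vertex set {0..<n} is given by a symmetric irreflexive edge relation
  E on {0..<n}; each undirected edge {i,j} appears as both (i,j) and (j,i).\<close>

definition simple_graph :: "nat \<Rightarrow> (nat \<times> nat) set \<Rightarrow> bool" where
  "simple_graph n E \<longleftrightarrow> E \<subseteq> {0..<n} \<times> {0..<n} \<and> sym E \<and> irrefl E"

definition graph_connected :: "nat \<Rightarrow> (nat \<times> nat) set \<Rightarrow> bool" where
  "graph_connected n E \<longleftrightarrow> (\<forall>i<n. \<forall>j<n. (i, j) \<in> E\<^sup>*)"

definition cut_size :: "nat \<Rightarrow> (nat \<times> nat) set \<Rightarrow> nat set \<Rightarrow> nat" where
  "cut_size n E S = card {(i, j) \<in> E. i \<in> S \<and> j \<in> {0..<n} - S}"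

definition mincut :: "nat \<Rightarrow> (nat \<times> nat) set \<Rightarrow> nat" where
  "mincut n E = Min {cut_size n E S | S. S \<noteq> {} \<and> S \<subset> {0..<n}}"

definition Ncut :: "nat \<Rightarrow> (nat \<times> nat) set \<Rightarrow> nat \<Rightarrow> nat set set" where
  "Ncut n E m = {S. S \<subseteq> {0..<n} \<and> cut_size n E S \<le> m}"

text \<open>tau^cut = max over positive integers k of (1/k) log |N(k * mincut)|
  (the maximum is attained, so it equals the supremum).\<close>
definition tau_cut :: "nat \<Rightarrow> (nat \<times> nat) set \<Rightarrow> real" where
  "tau_cut n E = Sup {ln (real (card (Ncut n E (k * mincut n E)))) / real k | k::nat. k \<ge> 1}"

definition A_set :: "(nat, 'b) monoid_scheme \<Rightarrow> nat \<Rightarrow> (nat \<times> nat) set \<Rightarrow> nat \<Rightarrow> (nat \<Rightarrow> nat) set" where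
  "A_set G n E k = {w \<in> {0..<n} \<rightarrow>\<^sub>E carrier G.
      (\<exists>i<n. w i \<noteq> \<one>\<^bsub>G\<^esub>) \<and>
      card {(i, j) \<in> E. i > j \<and> w i \<otimes>\<^bsub>G\<^esub> inv\<^bsub>G\<^esub> (w j) \<noteq> \<one>\<^bsub>G\<^esub>} < k * mincut n E}"

end

theory Submission
  imports Defs
begin

text \<open>A word \<open>w \<in> \<A>\<^sub>k\<close> is determined by its values together with its level sets
  \<open>S\<^sub>a = {i. w\<^sub>i = a}\<close>. An edge whose endpoints carry different values lies in the cuts of exactly two
  level sets, so the cuts of the level sets sum to less than \<open>2k\<cdot>mincut\<close>. Since a nonempty proper
  level set has cut at least \<open>mincut\<close>, \<open>w\<close> takes at most \<open>2k - 1\<close> values, and with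
  \<open>j(S) = \<lfloor>e(S,S\<^sup>c)/mincut\<rfloor> + 1\<close> the level sets satisfy \<open>\<Sum>\<^sub>a j(S\<^sub>a) \<le> 2(2k - 1)\<close>.
  Encode \<open>w\<close> injectively as a list of \<open>2k - 1\<close> pairs \<open>(a, S\<^sub>a)\<close> and give a set \<open>S\<close> the weight
  \<open>q\<^bsup>j(S)\<^esup>\<close>, \<open>q = e\<^sup>-\<^sup>\<tau>/2\<close>. As at most \<open>|\<N>(j\<cdot>mincut)| \<le> e\<^bsup>j\<tau>\<^esup>\<close> sets have \<open>j(S) = j\<close>,
  all weights sum to at most \<open>\<Sum>\<^sub>j 2\<^sup>-\<^sup>j \<le> 1\<close>; so all lists together weigh at most \<open>M\<^bsup>2k-1\<^esup>\<close>,
  while each code of a word in \<open>\<A>\<^sub>k\<close> weighs at least \<open>q\<^bsup>2(2k-1)\<^esup>\<close>. Hence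
  \<open>|\<A>\<^sub>k| \<le> M\<^bsup>2k-1\<^esup>(2e\<^sup>\<tau>)\<^bsup>2(2k-1)\<^esup>\<close>, which is stronger than the claimed bound.\<close>

lemma simple_graph_finite: "simple_graph n E \<Longrightarrow> finite E"
  unfolding simple_graph_def by (meson finite_SigmaI finite_atLeastLessThan finite_subset)

lemma mincut_le_cut_size:
  assumes "S \<noteq> {}" "S \<subset> {0..<n}"
  shows "mincut n E \<le> cut_size n E S"
proof -
  have "{cut_size n E S | S. S \<noteq> {} \<and> S \<subset> {0..<n}} \<subseteq> cut_size n E ` Pow {0..<n}"
    by auto
  then have "finite {cut_size n E S | S. S \<noteq> {} \<and> S \<subset> {0..<n}}"
    by (rule finite_subset) simp
  then show ?thesis
    unfolding mincut_def using assms by (intro Min_le) auto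
qed

lemma Ncut_subset_Pow: "Ncut n E m \<subseteq> Pow {0..<n}"
  unfolding Ncut_def by auto

lemma finite_Ncut: "finite (Ncut n E m)"
  by (rule finite_subset[OF Ncut_subset_Pow]) simp

lemma card_Ncut_pos: "0 < card (Ncut n E m)"
proof -
  have "{} \<in> Ncut n E m"
    unfolding Ncut_def cut_size_def by simp
  then show ?thesis
    using finite_Ncut by (auto simp: card_gt_0_iff)
qed

lemma card_Ncut_le: "card (Ncut n E m) \<le> 2 ^ n"
proof -
  have "card (Ncut n E m) \<le> card (Pow {0..<n})"
    by (rule card_mono[OF _ Ncut_subset_Pow]) simp
  then show ?thesis
    by (simp add: card_Pow)
qed

lemma ln_card_Ncut_div_le_tau_cut:
  assumes "k \<ge> 1"
  shows "ln (real (card (Ncut n E (k * mincut n E)))) / real k \<le> tau_cut n E"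
proof -
  let ?F = "{ln (real (card (Ncut n E (k * mincut n E)))) / real k | k::nat. k \<ge> 1}"
  have "bdd_above ?F"
  proof (rule bdd_aboveI)
    fix x assume "x \<in> ?F"
    then obtain j where j: "j \<ge> 1" and x: "x = ln (real (card (Ncut n E (j * mincut n E)))) / real j"
      by blast
    let ?c = "real (card (Ncut n E (j * mincut n E)))"
    have c: "1 \<le> ?c" "?c \<le> 2 ^ n"
      using card_Ncut_pos[of n E] card_Ncut_le[of n E]
      by (simp_all add: Suc_le_eq)
    have "x \<le> ln ?c"
      unfolding x using c j by (simp add: divide_le_eq mult_le_cancel_left1)
    also have "\<dots> \<le> ln (2 ^ n)"
      using c by simp
    finally show "x \<le> ln (2 ^ n)" .
  qed
  then show ?thesis
    unfolding tau_cut_def using assms by (intro cSup_upper) auto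
qed

lemma tau_cut_nonneg: "0 \<le> tau_cut n E"
  using ln_card_Ncut_div_le_tau_cut[of 1 n E] card_Ncut_pos[of n E]
  by (simp add: Suc_le_eq order_trans[rotated])

lemma card_Ncut_le_exp_tau_cut:
  assumes "k \<ge> 1"
  shows "real (card (Ncut n E (k * mincut n E))) \<le> exp (real k * tau_cut n E)"
proof -
  let ?c = "real (card (Ncut n E (k * mincut n E)))"
  have "ln ?c \<le> real k * tau_cut n E"
    using ln_card_Ncut_div_le_tau_cut[OF assms] assms by (simp add: divide_le_eq mult.commute)
  then show ?thesis
    using card_Ncut_pos by (metis exp_le_cancel_iff exp_ln of_nat_0_less_iff)
qed

lemma sum_half_powers_le_1:
  assumes "finite J" "0 \<notin> J"
  shows "(\<Sum>j\<in>J. (1/2::real) ^ j) \<le> 1"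
proof -
  have geometric: "(\<Sum>j\<in>{1..N}. (1/2::real) ^ j) = 1 - (1/2) ^ N" for N
    by (induction N) (auto simp: atLeastAtMostSuc_conv)
  have "J \<subseteq> {1..Max J}"
  proof
    fix j assume "j \<in> J"
    with assms show "j \<in> {1..Max J}"
      by (cases j) auto
  qed
  then have "(\<Sum>j\<in>J. (1/2::real) ^ j) \<le> (\<Sum>j\<in>{1..Max J}. (1/2) ^ j)"
    by (intro sum_mono2) auto
  moreover have "(0::real) \<le> (1/2) ^ Max J"
    by simp
  ultimately show ?thesis
    unfolding geometric by linarith
qed

text \<open>\<open>cut_level n E S\<close> is the least \<open>j\<close> with \<open>cut_size n E S < j * mincut n E\<close>.\<close>

definition cut_level :: "nat \<Rightarrow> (nat \<times> nat) set \<Rightarrow> nat set \<Rightarrow> nat" where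
  "cut_level n E S = cut_size n E S div mincut n E + 1"

lemma cut_level_empty [simp]: "cut_level n E {} = 1"
  by (simp add: cut_level_def cut_size_def)

lemma in_Ncut_cut_level:
  assumes "mincut n E \<ge> 1" "S \<subseteq> {0..<n}"
  shows "S \<in> Ncut n E (cut_level n E S * mincut n E)"
proof -
  have "cut_size n E S < (cut_size n E S div mincut n E + 1) * mincut n E"
    using assms(1) dividend_less_div_times[of "mincut n E" "cut_size n E S"] by simp
  then show ?thesis
    using assms(2) unfolding Ncut_def cut_level_def by simp
qed

lemma sum_Pow_cut_level_le_1:
  assumes mc: "mincut n E \<ge> 1"
  shows "(\<Sum>S\<in>Pow {0..<n}. (exp (- tau_cut n E) / 2) ^ cut_level n E S) \<le> 1"
proof -
  define q where "q = exp (- tau_cut n E) / 2"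
  let ?P = "Pow {0..<n}"
  let ?L = "\<lambda>j. {S\<in>?P. cut_level n E S = j}"
  have "(\<Sum>S\<in>?P. q ^ cut_level n E S) = (\<Sum>j\<in>cut_level n E ` ?P. real (card (?L j)) * q ^ j)"
    by (subst sum.image_gen[of ?P _ "cut_level n E"]) simp_all
  also have "\<dots> \<le> (\<Sum>j\<in>cut_level n E ` ?P. (1/2) ^ j)"
  proof (rule sum_mono)
    fix j assume "j \<in> cut_level n E ` ?P"
    then have j: "j \<ge> 1"
      unfolding cut_level_def by auto
    have "?L j \<subseteq> Ncut n E (j * mincut n E)"
      using in_Ncut_cut_level[OF mc] by auto
    then have "real (card (?L j)) \<le> exp (real j * tau_cut n E)"
      using card_mono[OF finite_Ncut] card_Ncut_le_exp_tau_cut[OF j] by (meson of_nat_le_iff order_trans)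
    then have "real (card (?L j)) * q ^ j \<le> exp (real j * tau_cut n E) * q ^ j"
      unfolding q_def by (intro mult_right_mono) auto
    also have "\<dots> = (1/2) ^ j"
      unfolding q_def by (simp add: power_divide exp_of_nat_mult[symmetric] exp_minus field_simps)
    finally show "real (card (?L j)) * q ^ j \<le> (1/2) ^ j" .
  qed
  also have "\<dots> \<le> 1"
    by (rule sum_half_powers_le_1) (auto simp: cut_level_def)
  finally show ?thesis
    unfolding q_def .
qed

lemma card_edges_le_twice_descending:
  fixes E :: "(nat \<times> nat) set"
  assumes "sym E" "irrefl E" "finite E" and P_sym: "\<And>i j. P i j \<longleftrightarrow> P j i"
  shows "card {(i, j) \<in> E. P i j} \<le> 2 * card {(i, j) \<in> E. i > j \<and> P i j}"
proof -
  let ?D = "{(i, j) \<in> E. i > j \<and> P i j}"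
  have fin: "finite {(i, j) \<in> E. Q i j}" for Q
    using assms(3) by (rule rev_finite_subset) auto
  have "{(i, j) \<in> E. P i j} \<subseteq> ?D \<union> prod.swap ` ?D"
  proof clarify
    fix i j assume ij: "(i, j) \<in> E" "P i j" and "(i, j) \<notin> prod.swap ` ?D"
    then have "(j, i) \<notin> ?D"
      by (metis (no_types, lifting) image_eqI swap_simp)
    moreover have "i \<noteq> j"
      using ij assms(2) unfolding irrefl_def by blast
    ultimately show "j < i"
      using ij assms(1) P_sym unfolding sym_def by auto
  qed
  then have "card {(i, j) \<in> E. P i j} \<le> card (?D \<union> prod.swap ` ?D)"
    using fin by (intro card_mono) auto
  also have "\<dots> \<le> card ?D + card (prod.swap ` ?D)"
    by (rule card_Un_le)
  also have "\<dots> \<le> 2 * card ?D"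
    using card_image_le[OF fin] by simp
  finally show ?thesis .
qed

lemma sum_cut_size_level_sets_le:
  assumes "finite E"
  shows "(\<Sum>a\<in>w ` {0..<n}. cut_size n E {x\<in>{0..<n}. w x = a}) \<le> card {(i, j) \<in> E. w i \<noteq> w j}"
proof -
  let ?B = "\<lambda>a. {(i, j) \<in> E. w i \<noteq> w j \<and> w i = a}"
  have fin: "finite {(i, j) \<in> E. Q i j}" for Q
    using assms by (rule rev_finite_subset) auto
  have "(\<Sum>a\<in>w ` {0..<n}. cut_size n E {x\<in>{0..<n}. w x = a}) \<le> (\<Sum>a\<in>w ` {0..<n}. card (?B a))"
    unfolding cut_size_def using fin by (intro sum_mono card_mono) auto
  also have "\<dots> = card (\<Union>a\<in>w ` {0..<n}. ?B a)"
    using fin by (intro card_UN_disjoint[symmetric]) auto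
  also have "\<dots> \<le> card {(i, j) \<in> E. w i \<noteq> w j}"
    using fin by (intro card_mono) auto
  finally show ?thesis .
qed

lemma card_image_mult_mincut_le:
  assumes "card (w ` {0..<n}) \<ge> 2"
  shows "card (w ` {0..<n}) * mincut n E \<le> (\<Sum>a\<in>w ` {0..<n}. cut_size n E {x\<in>{0..<n}. w x = a})"
proof -
  have "mincut n E \<le> cut_size n E {x\<in>{0..<n}. w x = a}" if a: "a \<in> w ` {0..<n}" for a
  proof (rule mincut_le_cut_size)
    have "\<not> w ` {0..<n} \<subseteq> {a}"
      using assms card_mono[of "{a}" "w ` {0..<n}"] by auto
    then show "{x\<in>{0..<n}. w x = a} \<subset> {0..<n}"
      by auto
  qed (use a in auto)
  then show ?thesis
    using sum_mono[of "w ` {0..<n}" "\<lambda>_. mincut n E"] by simp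
qed

lemma A_set_sum_cut_size_less:
  assumes "simple_graph n E" "group G" "w \<in> A_set G n E k"
  shows "(\<Sum>a\<in>w ` {0..<n}. cut_size n E {x\<in>{0..<n}. w x = a}) < 2 * k * mincut n E"
proof -
  have E: "E \<subseteq> {0..<n} \<times> {0..<n}" "sym E" "irrefl E" "finite E"
    using assms(1) simple_graph_finite unfolding simple_graph_def by auto
  have w: "w \<in> {0..<n} \<rightarrow>\<^sub>E carrier G"
    and less: "card {(i, j) \<in> E. i > j \<and> w i \<otimes>\<^bsub>G\<^esub> inv\<^bsub>G\<^esub> (w j) \<noteq> \<one>\<^bsub>G\<^esub>} < k * mincut n E"
    using assms(3) unfolding A_set_def by auto
  interpret group G
    by (fact assms(2))
  have "w i \<otimes>\<^bsub>G\<^esub> inv\<^bsub>G\<^esub> (w j) = \<one>\<^bsub>G\<^esub> \<longleftrightarrow> w i = w j" if "(i, j) \<in> E" for i j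
  proof -
    have "w i \<in> carrier G" "w j \<in> carrier G"
      using that E(1) w by auto
    then show ?thesis
      using inv_solve_right[of "\<one>\<^bsub>G\<^esub>" "w i" "w j"] by auto
  qed
  then have "{(i, j) \<in> E. i > j \<and> w i \<otimes>\<^bsub>G\<^esub> inv\<^bsub>G\<^esub> (w j) \<noteq> \<one>\<^bsub>G\<^esub>} = {(i, j) \<in> E. i > j \<and> w i \<noteq> w j}"
    by auto
  then have "card {(i, j) \<in> E. i > j \<and> w i \<noteq> w j} < k * mincut n E"
    using less by simp
  moreover have "card {(i, j) \<in> E. w i \<noteq> w j} \<le> 2 * card {(i, j) \<in> E. i > j \<and> w i \<noteq> w j}"
    by (rule card_edges_le_twice_descending[OF E(2-4)]) auto
  ultimately show ?thesis
    using sum_cut_size_level_sets_le[OF E(4), of n w] by linarith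
qed

lemma A_set_level_sets_le:
  assumes "simple_graph n E" "group G" "k \<ge> 1" "mincut n E \<ge> 1" "w \<in> A_set G n E k"
  shows "card (w ` {0..<n}) \<le> 2 * k - 1"
    and "(\<Sum>a\<in>w ` {0..<n}. cut_size n E {x\<in>{0..<n}. w x = a} div mincut n E) \<le> 2 * k - 1"
proof -
  let ?mc = "mincut n E" and ?c = "\<lambda>a. cut_size n E {x\<in>{0..<n}. w x = a}"
  have sum_less: "(\<Sum>a\<in>w ` {0..<n}. ?c a) < 2 * k * ?mc"
    by (rule A_set_sum_cut_size_less[OF assms(1,2,5)])
  show "card (w ` {0..<n}) \<le> 2 * k - 1"
  proof (cases "card (w ` {0..<n}) \<ge> 2")
    case True
    then have "card (w ` {0..<n}) * ?mc < 2 * k * ?mc"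
      using le_less_trans[OF card_image_mult_mincut_le sum_less] by blast
    then have "card (w ` {0..<n}) < 2 * k"
      by simp
    then show ?thesis
      by linarith
  qed (use assms(3) in linarith)
  have "?mc * (\<Sum>a\<in>w ` {0..<n}. ?c a div ?mc) \<le> (\<Sum>a\<in>w ` {0..<n}. ?c a)"
    unfolding sum_distrib_left by (intro sum_mono) (simp add: mult.commute div_times_less_eq_dividend)
  also have "\<dots> < ?mc * (2 * k)"
    using sum_less by (simp add: mult.commute)
  finally have "(\<Sum>a\<in>w ` {0..<n}. ?c a div ?mc) < 2 * k"
    by simp
  then show "(\<Sum>a\<in>w ` {0..<n}. ?c a div ?mc) \<le> 2 * k - 1"
    by linarith
qed

text \<open>The padding pair \<open>(0, {})\<close> never equals a genuine pair, whose level set is nonempty;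
  this is what makes the code injective.\<close>

definition level_set_code :: "nat \<Rightarrow> nat set \<Rightarrow> (nat \<Rightarrow> nat) \<Rightarrow> nat \<Rightarrow> nat \<times> nat set" where
  "level_set_code m V w = (\<lambda>i\<in>{0..<m}.
     if i < card (w ` V)
     then (sorted_list_of_set (w ` V) ! i, {x\<in>V. w x = sorted_list_of_set (w ` V) ! i})
     else (0, {}))"

lemma level_set_code_PiE:
  assumes "finite V" "w \<in> V \<rightarrow>\<^sub>E C" "0 \<in> C"
  shows "level_set_code m V w \<in> {0..<m} \<rightarrow>\<^sub>E C \<times> Pow V"
proof -
  have "sorted_list_of_set (w ` V) ! i \<in> C" if "i < card (w ` V)" for i
  proof -
    have "sorted_list_of_set (w ` V) ! i \<in> w ` V"
      using that assms(1) nth_mem[of i "sorted_list_of_set (w ` V)"] by simp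
    then show ?thesis
      using assms(2) by auto
  qed
  then show ?thesis
    using assms(3) by (simp add: level_set_code_def restrict_PiE_iff)
qed

lemma inj_on_level_set_code:
  assumes "finite V"
  shows "inj_on (level_set_code m V) {w \<in> extensional V. card (w ` V) \<le> m}"
proof (rule inj_onI)
  fix w w' assume w: "w \<in> {w \<in> extensional V. card (w ` V) \<le> m}"
    and w': "w' \<in> {w \<in> extensional V. card (w ` V) \<le> m}"
    and code: "level_set_code m V w = level_set_code m V w'"
  show "w = w'"
  proof (rule extensionalityI)
    fix x assume x: "x \<in> V"
    let ?vs = "sorted_list_of_set (w ` V)" and ?vs' = "sorted_list_of_set (w' ` V)"
    have "w x \<in> set ?vs"
      using x assms by simp
    then obtain i where i: "i < card (w ` V)" "?vs ! i = w x"
      by (auto simp: in_set_conv_nth)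
    then have "i < m"
      using w by simp
    then have "level_set_code m V w i = (w x, {y\<in>V. w y = w x})"
      using i unfolding level_set_code_def by simp
    then have code_i: "level_set_code m V w' i = (w x, {y\<in>V. w y = w x})"
      using code by simp
    show "w x = w' x"
    proof (cases "i < card (w' ` V)")
      case True
      then have "level_set_code m V w' i = (?vs' ! i, {y\<in>V. w' y = ?vs' ! i})"
        using \<open>i < m\<close> by (simp add: level_set_code_def)
      then have "x \<in> {y\<in>V. w' y = w x}"
        using code_i x by auto
      then show ?thesis
        by simp
    next
      case False
      then have "level_set_code m V w' i = (0, {})"
        using \<open>i < m\<close> by (simp add: level_set_code_def)
      then show ?thesis
        using code_i x by auto
    qed
  qed (use w w' in auto)
qed

lemma sum_level_set_code:
  assumes "finite V" "card (w ` V) \<le> m"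
  shows "(\<Sum>i\<in>{0..<m}. g (snd (level_set_code m V w i)))
    = (\<Sum>a\<in>w ` V. g {x\<in>V. w x = a}) + (m - card (w ` V)) * g {}"
proof -
  let ?r = "card (w ` V)" and ?vs = "sorted_list_of_set (w ` V)"
  have "(\<Sum>i\<in>{0..<m}. g (snd (level_set_code m V w i)))
      = (\<Sum>i\<in>{0..<?r}. g (snd (level_set_code m V w i))) + (\<Sum>i\<in>{?r..<m}. g (snd (level_set_code m V w i)))"
    using assms(2) by (simp add: sum.atLeastLessThan_concat)
  also have "(\<Sum>i\<in>{0..<?r}. g (snd (level_set_code m V w i))) = (\<Sum>i\<in>{0..<?r}. g {x\<in>V. w x = ?vs ! i})"
    using assms(2) by (intro sum.cong) (auto simp: level_set_code_def)
  also have "\<dots> = (\<Sum>a\<in>w ` V. g {x\<in>V. w x = a})"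
  proof (rule sum.reindex_bij_betw)
    show "bij_betw ((!) ?vs) {0..<?r} (w ` V)"
      using bij_betw_nth[of ?vs "{..<?r}" "w ` V"] assms(1) by (simp add: lessThan_atLeast0)
  qed
  also have "(\<Sum>i\<in>{?r..<m}. g (snd (level_set_code m V w i))) = (m - ?r) * g {}"
    by (simp add: level_set_code_def)
  finally show ?thesis .
qed

lemma card_mult_le_sum_weights:
  fixes u :: "'b \<Rightarrow> real"
  assumes "inj_on f A" "f ` A \<subseteq> P" "finite P"
    and "\<And>p. p \<in> P \<Longrightarrow> 0 \<le> u p" "\<And>a. a \<in> A \<Longrightarrow> c \<le> u (f a)"
  shows "real (card A) * c \<le> (\<Sum>p\<in>P. u p)"
proof -
  have "real (card A) * c = (\<Sum>a\<in>A. c)"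
    by simp
  also have "\<dots> \<le> (\<Sum>a\<in>A. u (f a))"
    using assms(5) by (rule sum_mono)
  also have "\<dots> = (\<Sum>p\<in>f ` A. u p)"
    using assms(1) by (simp add: sum.reindex)
  also have "\<dots> \<le> (\<Sum>p\<in>P. u p)"
    using assms(2-4) by (intro sum_mono2) auto
  finally show ?thesis .
qed

lemma sum_PiE_cut_level_weights_le:
  assumes "mincut n E \<ge> 1"
  shows "(\<Sum>t\<in>{0..<m} \<rightarrow>\<^sub>E {0..<M} \<times> Pow {0..<n}.
      \<Prod>i\<in>{0..<m}. (exp (- tau_cut n E) / 2) ^ cut_level n E (snd (t i))) \<le> real M ^ m"
proof -
  let ?w = "\<lambda>S. (exp (- tau_cut n E) / 2) ^ cut_level n E S"
  have "(\<Sum>t\<in>{0..<m} \<rightarrow>\<^sub>E {0..<M} \<times> Pow {0..<n}. \<Prod>i\<in>{0..<m}. ?w (snd (t i)))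
      = (\<Sum>p\<in>{0..<M} \<times> Pow {0..<n}. ?w (snd p)) ^ m"
    by (subst prod_sum_PiE[symmetric]) simp_all
  also have "(\<Sum>p\<in>{0..<M} \<times> Pow {0..<n}. ?w (snd p)) = real M * (\<Sum>S\<in>Pow {0..<n}. ?w S)"
  proof -
    have "(\<Sum>p\<in>{0..<M} \<times> Pow {0..<n}. ?w (snd p)) = (\<Sum>x\<in>{0..<M}. \<Sum>S\<in>Pow {0..<n}. ?w S)"
      unfolding sum.cartesian_product by (simp add: case_prod_beta)
    then show ?thesis
      by simp
  qed
  also have "(real M * (\<Sum>S\<in>Pow {0..<n}. ?w S)) ^ m \<le> real M ^ m"
    using sum_Pow_cut_level_le_1[OF assms]
    by (intro power_mono) (simp_all add: mult_left_le sum_nonneg)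
  finally show ?thesis .
qed

lemma A_set_sum_cut_level_le:
  assumes "simple_graph n E" "group G" "k \<ge> 1" "mincut n E \<ge> 1" "w \<in> A_set G n E k"
  shows "(\<Sum>i\<in>{0..<2*k-1}. cut_level n E (snd (level_set_code (2*k-1) {0..<n} w i))) \<le> 2 * (2*k-1)"
proof -
  let ?c = "\<lambda>a. cut_size n E {x\<in>{0..<n}. w x = a}"
  have card_le: "card (w ` {0..<n}) \<le> 2*k-1"
    by (rule A_set_level_sets_le(1)[OF assms])
  have "(\<Sum>i\<in>{0..<2*k-1}. cut_level n E (snd (level_set_code (2*k-1) {0..<n} w i)))
      = (\<Sum>a\<in>w ` {0..<n}. cut_level n E {x\<in>{0..<n}. w x = a}) + (2*k-1 - card (w ` {0..<n}))"
    using sum_level_set_code[OF _ card_le, of "cut_level n E"] by simp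
  also have "(\<Sum>a\<in>w ` {0..<n}. cut_level n E {x\<in>{0..<n}. w x = a})
      = (\<Sum>a\<in>w ` {0..<n}. ?c a div mincut n E) + card (w ` {0..<n})"
    unfolding cut_level_def sum.distrib by simp
  finally show ?thesis
    using A_set_level_sets_le(2)[OF assms] card_le by linarith
qed

lemma card_A_set_mult_weight_le:
  assumes sg: "simple_graph n E" and gr: "group G" and carr: "carrier G = {0..<M}"
    and "M \<ge> 1" "k \<ge> 1" and mc: "mincut n E \<ge> 1"
  shows "real (card (A_set G n E k)) * (exp (- tau_cut n E) / 2) ^ (2 * (2*k-1)) \<le> real M ^ (2*k-1)"
proof -
  define q where "q = exp (- tau_cut n E) / 2"
  define m where "m = 2*k-1"
  let ?V = "{0..<n}"
  let ?P = "{0..<m} \<rightarrow>\<^sub>E {0..<M} \<times> Pow ?V"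
  define u where "u t = (\<Prod>i\<in>{0..<m}. q ^ cut_level n E (snd (t i)))" for t :: "nat \<Rightarrow> nat \<times> nat set"
  have "exp (- tau_cut n E) \<le> 1"
    using tau_cut_nonneg[of n E] by simp
  then have q: "0 < q" "q \<le> 1"
    unfolding q_def by (simp, linarith)
  have A_sub: "A_set G n E k \<subseteq> {w \<in> extensional ?V. card (w ` ?V) \<le> m}"
    using A_set_level_sets_le(1)[OF sg gr \<open>k \<ge> 1\<close> mc] unfolding m_def
    by (auto simp: A_set_def PiE_def)
  have "real (card (A_set G n E k)) * q ^ (2 * m) \<le> (\<Sum>t\<in>?P. u t)"
  proof (rule card_mult_le_sum_weights)
    show "inj_on (level_set_code m ?V) (A_set G n E k)"
      using inj_on_level_set_code A_sub by (rule inj_on_subset) simp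
    show "level_set_code m ?V ` A_set G n E k \<subseteq> ?P"
      using level_set_code_PiE[of ?V _ "{0..<M}" m] \<open>M \<ge> 1\<close> carr by (auto simp: A_set_def)
    show "q ^ (2 * m) \<le> u (level_set_code m ?V w)" if "w \<in> A_set G n E k" for w
      unfolding u_def power_sum[symmetric] m_def
      using A_set_sum_cut_level_le[OF sg gr \<open>k \<ge> 1\<close> mc that] q by (intro power_decreasing) auto
  qed (use q in \<open>auto simp: u_def finite_PiE prod_nonneg\<close>)
  also have "\<dots> \<le> real M ^ m"
    unfolding u_def q_def using mc by (rule sum_PiE_cut_level_weights_le)
  finally show ?thesis
    unfolding q_def m_def .
qed

lemma finite_A_set: "finite (carrier G) \<Longrightarrow> finite (A_set G n E k)"
  by (rule finite_subset[of _ "{0..<n} \<rightarrow>\<^sub>E carrier G"]) (auto simp: A_set_def finite_PiE)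

lemma constant_in_A_set:
  assumes "simple_graph n E" "group G" "a \<in> carrier G" "a \<noteq> \<one>\<^bsub>G\<^esub>" "n \<ge> 1" "k * mincut n E \<ge> 1"
  shows "(\<lambda>i\<in>{0..<n}. a) \<in> A_set G n E k"
proof -
  define w where "w = (\<lambda>i\<in>{0..<n}. a)"
  have "E \<subseteq> {0..<n} \<times> {0..<n}"
    using assms(1) unfolding simple_graph_def by simp
  then have no_edges: "{(i, j) \<in> E. i > j \<and> w i \<otimes>\<^bsub>G\<^esub> inv\<^bsub>G\<^esub> (w j) \<noteq> \<one>\<^bsub>G\<^esub>} = {}"
    using assms(2,3) by (auto simp: w_def group.r_inv)
  have "w \<in> {0..<n} \<rightarrow>\<^sub>E carrier G" "\<exists>i<n. w i \<noteq> \<one>\<^bsub>G\<^esub>"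
    using assms(3-5) by (auto simp: w_def intro: exI[of _ 0])
  then show ?thesis
    unfolding A_set_def w_def[symmetric] mem_Collect_eq no_edges card.empty
    using assms(6) by simp
qed

lemma ln_card_A_set_le:
  assumes sg: "simple_graph n E" and gr: "group G" and carr: "carrier G = {0..<M}"
    and "M \<ge> 2" "n \<ge> 1" "k \<ge> 1" and mc: "mincut n E \<ge> 1"
  shows "ln (real (card (A_set G n E k)))
    \<le> (2 * real k - 1) * ln (real M) + (4 * real k - 2) * (tau_cut n E + ln 2)"
proof -
  let ?C = "real (card (A_set G n E k))" and ?q = "exp (- tau_cut n E) / 2"
  have "0 \<in> carrier G" "1 \<in> carrier G"
    using carr \<open>M \<ge> 2\<close> by auto
  then obtain a where "a \<in> carrier G" "a \<noteq> \<one>\<^bsub>G\<^esub>"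
    by (metis zero_neq_one)
  moreover have "k * mincut n E \<ge> 1"
    using \<open>k \<ge> 1\<close> mc by simp
  ultimately have "A_set G n E k \<noteq> {}"
    using constant_in_A_set[OF sg gr _ _ \<open>n \<ge> 1\<close>] by blast
  then have C: "?C > 0"
    using finite_A_set[of G n E k] carr by (simp add: card_gt_0_iff)
  have "ln (?C * ?q ^ (2 * (2*k-1))) \<le> ln (real M ^ (2*k-1))"
    using card_A_set_mult_weight_le[OF sg gr carr _ \<open>k \<ge> 1\<close> mc] \<open>M \<ge> 2\<close> C by simp
  then have "ln ?C + real (2 * (2*k-1)) * (- tau_cut n E - ln 2) \<le> real (2*k-1) * ln (real M)"
    using C \<open>M \<ge> 2\<close> by (simp add: ln_mult ln_realpow ln_div)
  then show ?thesis
    using \<open>k \<ge> 1\<close> by (simp add: of_nat_diff algebra_simps)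
qed

lemma two_k_minus_one_ln_two_le:
  assumes "k \<ge> 1"
  shows "(2 * real k - 1) * ln 2 \<le> real k * ln (2 * real k)"
proof -
  have "1 - 1 / real k \<le> ln (real k)"
    using ln_le_minus_one[of "1 / real k"] assms by (simp add: ln_div)
  then have "real k - 1 \<le> real k * ln (real k)"
    using assms by (simp add: field_simps)
  moreover have "(real k - 1) * ln 2 \<le> real k - 1"
    using assms ln_le_minus_one[of 2] by (simp add: mult_left_le)
  ultimately show ?thesis
    using assms by (simp add: ln_mult algebra_simps)
qed

lemma ln_double_le_two_ln_double:
  fixes x y :: real
  assumes "0 < x" "x \<le> y ^ 2" "0 < y"
  shows "ln (2 * x) \<le> 2 * ln (2 * y)"
proof -
  have "2 * x \<le> 4 * y ^ 2"
    using assms(2) zero_le_power2[of y] by linarith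
  then have "2 * x \<le> (2 * y) ^ 2"
    by (simp add: power_mult_distrib)
  then have "ln (2 * x) \<le> ln ((2 * y) ^ 2)"
    using assms(1,3) by (subst ln_le_cancel_iff) auto
  also have "\<dots> = 2 * ln (2 * y)"
    using assms(3) ln_realpow[of "2 * y" 2] by (simp del: power_mult_distrib)
  finally show ?thesis .
qed

theorem lemma3:
  fixes G :: "(nat, 'b) monoid_scheme" and n M k :: nat and E :: "(nat \<times> nat) set"
  assumes "simple_graph n E" and "graph_connected n E" and "n \<ge> 2"
    and "M \<ge> 2" and "group G" and "carrier G = {0..<M}"
    and "k \<ge> 1" and "real k \<le> real n ^ 2 / real (mincut n E)"
  shows "ln (real (card (A_set G n E k))) / real k
           < 2 * ln (real M) + 2 * ln (2 * real k * real (mincut n E)) + 4 * tau_cut n E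
       \<and> 2 * ln (real M) + 2 * ln (2 * real k * real (mincut n E)) + 4 * tau_cut n E
           \<le> 2 * ln (real M) + 4 * ln (2 * real n) + 4 * tau_cut n E"
proof -
  let ?mc = "real (mincut n E)" and ?t = "tau_cut n E"
  have mc: "mincut n E \<ge> 1"
    using assms(7,8) by (cases "mincut n E") auto
  have kmc: "real k * ?mc \<le> real n ^ 2"
    using assms(8) mc by (simp add: le_divide_eq)
  have "ln (2 * real k) \<le> ln (2 * real k * ?mc)"
    using mc assms(7) by simp
  then have "(2 * real k - 1) * ln 2 \<le> real k * ln (2 * real k * ?mc)"
    using two_k_minus_one_ln_two_le[OF assms(7)] by (meson mult_left_mono of_nat_0_le_iff order_trans)
  moreover have "0 < ln (real M)"
    using assms(4) by simp
  ultimately have "ln (real (card (A_set G n E k))) < real k * (2 * ln (real M) + 2 * ln (2 * real k * ?mc) + 4 * ?t)"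
    using ln_card_A_set_le[OF assms(1,5,6,4) _ assms(7) mc] assms(3) tau_cut_nonneg[of n E]
    by (simp add: algebra_simps)
  moreover have "ln (2 * real k * ?mc) \<le> 2 * ln (2 * real n)"
    using ln_double_le_two_ln_double[OF _ kmc] mc assms(3,7) by (simp add: mult.assoc)
  ultimately show ?thesis
    using assms(7) by (simp add: divide_less_eq mult.commute)
qed

end
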